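(* Let $n\ge1$, $p$ a prime dividing $n$, and $\prec$ a degree-compatible term order on the monomials of $\mathbb{C}[x_1,\ldots,x_n]$. Then for every $0\le t\le p-1$, $$\{x^u\in D:\ \deg(x^u)<\tfrac{n(p-1)}{p}\}\subseteq\mathrm{Sm}(\prec,B_t).$$
   Context: A term order is degree-compatible if $\deg u<\deg v$ implies $u\prec v$. $\omega_1=e^{2\pi i/p}$, $\omega_j=\omega_1^j$; $B=\{1,\omega_1,\ldots,\omega_{p-1}\}^n$, $B_t=\{(t_1,\ldots,t_n)\in B: t_1\cdots t_n=\omega_t\}$. $D=\{x_1^{u_1}\cdots x_n^{u_n}: 0\le u_i\le p-1\}$. $\mathrm{Sm}(\prec,X)$ is the set of monomials that are not the $\prec$-leading monomial of any nonzero polynomial vanishing on $X$. *)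

theory Defs
  imports Complex_Main "HOL-Computational_Algebra.Primes"
begin

text \<open>Monomials in x_1..x_n are exponent vectors u :: nat => nat (variable x_(i+1)
  corresponds to index i < n) vanishing at indices >= n.\<close>

definition monoms :: "nat \<Rightarrow> (nat \<Rightarrow> nat) set" where
  "monoms n = {u. \<forall>i\<ge>n. u i = 0}"

definition mdeg :: "nat \<Rightarrow> (nat \<Rightarrow> nat) \<Rightarrow> nat" where
  "mdeg n u = (\<Sum>i<n. u i)"

definition term_order :: "nat \<Rightarrow> ((nat \<Rightarrow> nat) \<Rightarrow> (nat \<Rightarrow> nat) \<Rightarrow> bool) \<Rightarrow> bool" where
  "term_order n ord \<longleftrightarrow>
     (\<forall>u\<in>monoms n. \<not> ord u u) \<and>
     (\<forall>u\<in>monoms n. \<forall>v\<in>monoms n. \<forall>w\<in>monoms n. ord u v \<longrightarrow> ord v w \<longrightarrow> ord u w) \<and>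
     (\<forall>u\<in>monoms n. \<forall>v\<in>monoms n. u = v \<or> ord u v \<or> ord v u) \<and>
     (\<forall>u\<in>monoms n. \<forall>v\<in>monoms n. \<forall>w\<in>monoms n. ord u v \<longrightarrow> ord (\<lambda>i. u i + w i) (\<lambda>i. v i + w i)) \<and>
     (\<forall>u\<in>monoms n. u \<noteq> (\<lambda>i. 0) \<longrightarrow> ord (\<lambda>i. 0) u)"

definition degree_compatible :: "nat \<Rightarrow> ((nat \<Rightarrow> nat) \<Rightarrow> (nat \<Rightarrow> nat) \<Rightarrow> bool) \<Rightarrow> bool" where
  "degree_compatible n ord \<longleftrightarrow>
     (\<forall>u\<in>monoms n. \<forall>v\<in>monoms n. mdeg n u < mdeg n v \<longrightarrow> ord u v)"

definition is_poly :: "nat \<Rightarrow> ((nat \<Rightarrow> nat) \<Rightarrow> complex) \<Rightarrow> bool" where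
  "is_poly n f \<longleftrightarrow> finite {u. f u \<noteq> 0} \<and> {u. f u \<noteq> 0} \<subseteq> monoms n"

definition peval :: "nat \<Rightarrow> ((nat \<Rightarrow> nat) \<Rightarrow> complex) \<Rightarrow> (nat \<Rightarrow> complex) \<Rightarrow> complex" where
  "peval n f x = (\<Sum>u\<in>{u. f u \<noteq> 0}. f u * (\<Prod>i<n. x i ^ u i))"

definition is_leading_mono ::
  "((nat \<Rightarrow> nat) \<Rightarrow> (nat \<Rightarrow> nat) \<Rightarrow> bool) \<Rightarrow> ((nat \<Rightarrow> nat) \<Rightarrow> complex) \<Rightarrow> (nat \<Rightarrow> nat) \<Rightarrow> bool" where
  "is_leading_mono ord f u \<longleftrightarrow> f u \<noteq> 0 \<and> (\<forall>v. f v \<noteq> 0 \<longrightarrow> v = u \<or> ord v u)"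

definition Sm :: "nat \<Rightarrow> ((nat \<Rightarrow> nat) \<Rightarrow> (nat \<Rightarrow> nat) \<Rightarrow> bool) \<Rightarrow> (nat \<Rightarrow> complex) set
                   \<Rightarrow> (nat \<Rightarrow> nat) set" where
  "Sm n ord X = {u \<in> monoms n. \<not> (\<exists>f. is_poly n f \<and> (\<exists>v. f v \<noteq> 0) \<and>
                    (\<forall>x\<in>X. peval n f x = 0) \<and> is_leading_mono ord f u)}"

definition omega :: "nat \<Rightarrow> nat \<Rightarrow> complex" where
  "omega p j = cis (2 * pi / real p) ^ j"

text \<open>Points of C^n represented as x :: nat => complex, coordinates i < n, zero elsewhere.\<close>

definition Bset :: "nat \<Rightarrow> nat \<Rightarrow> (nat \<Rightarrow> complex) set" where
  "Bset n p = {x. (\<forall>i<n. \<exists>j<p. x i = omega p j) \<and> (\<forall>i\<ge>n. x i = 0)}"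

definition Bt :: "nat \<Rightarrow> nat \<Rightarrow> nat \<Rightarrow> (nat \<Rightarrow> complex) set" where
  "Bt n p t = {x \<in> Bset n p. (\<Prod>i<n. x i) = omega p t}"

definition Dset :: "nat \<Rightarrow> nat \<Rightarrow> (nat \<Rightarrow> nat) set" where
  "Dset n p = {u \<in> monoms n. \<forall>i<n. u i \<le> p - 1}"

end

theory Submission
  imports Defs
begin

text \<open>Summing a polynomial f that vanishes on B_t against x^((p-1)u) over B_t gives 0.
  A monomial x^e sums to |B_t| over B_t if all e_k are congruent mod p, and to 0 otherwise,
  because B_t is invariant under multiplying x_i by omega and x_j by omega^(p-1).
  For e = v + (p-1)u these congruences say v_k = u_k + c (mod p). If u is the leading monomial
  and v \<noteq> u is in the support, then deg v \<le> deg u; for c = 0 this contradicts v \<ge> u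
  componentwise (as u_k < p), and for c \<noteq> 0 counting the coordinates where u_k + c wraps
  around gives p deg u \<ge> n c (p - c) \<ge> n (p - 1). So only u survives, and f(u) |B_t| = 0.\<close>

lemma omega_add: "omega p (i + j) = omega p i * omega p j"
  by (simp add: omega_def power_add)

lemma omega_power: "omega p i ^ k = omega p (i * k)"
  by (simp add: omega_def power_mult)

lemma omega_sum: "(\<Prod>k\<in>A. omega p (a k)) = omega p (\<Sum>k\<in>A. a k)"
  by (simp add: omega_def power_sum)

lemma omega_nonzero: "omega p j \<noteq> 0"
  by (simp add: omega_def)

lemma omega_multiple: "p > 0 \<Longrightarrow> omega p (p * q) = 1"
  by (simp add: omega_def power_mult DeMoivre)

lemma omega_mod: "p > 0 \<Longrightarrow> omega p (j mod p) = omega p j"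
  by (metis div_mult_mod_eq mult.commute mult_1 omega_add omega_multiple)

lemma omega_eq_1_iff:
  assumes "p > 0"
  shows "omega p j = 1 \<longleftrightarrow> p dvd j"
proof
  let ?root = "\<lambda>k. cis (2 * pi * real k / real p)"
  have inj: "inj_on ?root {..<p}"
    using bij_betw_roots_unity[OF assms] by (simp add: bij_betw_def)
  assume "omega p j = 1"
  then have "?root (j mod p) = ?root 0"
    using omega_mod[OF assms, of j] by (simp add: omega_def DeMoivre mult.commute)
  with inj_onD[OF inj] have "j mod p = 0"
    using assms by simp
  then show "p dvd j" by auto
qed (use assms omega_multiple in auto)

lemma diff_one_le_mult_diff:
  fixes c p :: nat assumes "0 < c" "c < p" shows "p - 1 \<le> c * (p - c)"
proof -
  have "(c - 1) * 1 \<le> (c - 1) * (p - c)"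
    using assms by (intro mult_le_mono2) auto
  moreover have "c * (p - c) = (p - c) + (c - 1) * (p - c)"
    using assms by (cases c) auto
  ultimately show ?thesis using assms by linarith
qed

lemma mod_eq_if_dvd_add_pred_mult:
  fixes a b p :: nat
  assumes "p > 0" "p dvd a + (p - 1) * b" shows "a mod p = b mod p"
proof -
  have "a + p * b = (a + (p - 1) * b) + b"
    using assms(1) by (cases p) auto
  then have "(a + p * b) mod p = b mod p"
    using assms(2) by (metis mod_add_left_eq dvd_imp_mod_0 add_0)
  then show ?thesis by simp
qed

lemma finite_Bset: "finite (Bset n p)"
proof -
  have "Bset n p \<subseteq>
      {x. \<forall>i. (i \<in> {..<n} \<longrightarrow> x i \<in> omega p ` {..<p}) \<and> (i \<notin> {..<n} \<longrightarrow> x i = 0)}"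
    by (auto simp: Bset_def)
  moreover have "finite \<dots>"
    by (intro finite_set_of_finite_funs) auto
  ultimately show ?thesis by (rule finite_subset)
qed

lemma finite_Bt: "finite (Bt n p t)"
  using finite_Bset by (rule finite_subset[rotated]) (auto simp: Bt_def)

lemma Bt_nonempty:
  assumes "n \<ge> 1" "t < p"
  shows "Bt n p t \<noteq> {}"
proof -
  define x :: "nat \<Rightarrow> complex"
    where "x i = (if i = 0 then omega p t else if i < n then omega p 0 else 0)" for i
  obtain m where n: "n = Suc m"
    using assms(1) by (cases n) auto
  have "(\<Prod>i<n. x i) = x 0 * (\<Prod>i<m. x (Suc i))"
    unfolding n by (rule prod.lessThan_Suc_shift)
  also have "(\<Prod>i<m. x (Suc i)) = 1"
    by (rule prod.neutral) (auto simp: x_def omega_def n)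
  finally have "(\<Prod>i<n. x i) = omega p t"
    by (simp add: x_def)
  moreover have "x \<in> Bset n p"
    using assms by (auto simp: Bset_def x_def intro: exI[where x = 0])
  ultimately show ?thesis by (auto simp: Bt_def)
qed

definition mono_eval :: "nat \<Rightarrow> (nat \<Rightarrow> nat) \<Rightarrow> (nat \<Rightarrow> complex) \<Rightarrow> complex" where
  "mono_eval n e x = (\<Prod>i<n. x i ^ e i)"

lemma peval_eq_sum_mono_eval: "peval n f x = (\<Sum>v | f v \<noteq> 0. f v * mono_eval n v x)"
  by (simp add: peval_def mono_eval_def)

lemma mono_eval_add: "mono_eval n (\<lambda>k. a k + b k) x = mono_eval n a x * mono_eval n b x"
  by (simp add: mono_eval_def power_add prod.distrib)

lemma mono_eval_Bset_eq_1:
  assumes "p > 0" "x \<in> Bset n p" "\<And>k. k < n \<Longrightarrow> p dvd e k"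
  shows "mono_eval n e x = 1"
  unfolding mono_eval_def
proof (rule prod.neutral, rule ballI)
  fix k assume "k \<in> {..<n}"
  then obtain j where "x k = omega p j" "p dvd e k"
    using assms(2,3) by (auto simp: Bset_def)
  then show "x k ^ e k = 1"
    using assms(1) by (auto simp: omega_power omega_eq_1_iff)
qed

lemma rotate_in_Bt:
  assumes "p > 0" "p dvd (\<Sum>k<n. a k)" "x \<in> Bt n p t"
  shows "(\<lambda>k. x k * omega p (a k)) \<in> Bt n p t"
proof -
  have "\<exists>j<p. x k * omega p (a k) = omega p j" if "k < n" for k
  proof -
    obtain m where "x k = omega p m"
      using assms(3) \<open>k < n\<close> by (auto simp: Bt_def Bset_def)
    then have "x k * omega p (a k) = omega p ((m + a k) mod p)"
      using assms(1) by (simp add: omega_add omega_mod)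
    then show ?thesis
      using assms(1) mod_less_divisor by blast
  qed
  moreover have "(\<Prod>k<n. x k * omega p (a k)) = omega p t"
    using assms by (simp add: prod.distrib omega_sum omega_eq_1_iff Bt_def)
  ultimately show ?thesis
    using assms(3) by (simp add: Bt_def Bset_def)
qed

lemma sum_mono_eval_Bt_eq_omega_mult:
  assumes "p > 0" "p dvd (\<Sum>k<n. a k)"
  shows "(\<Sum>x\<in>Bt n p t. mono_eval n e x)
           = omega p (\<Sum>k<n. a k * e k) * (\<Sum>x\<in>Bt n p t. mono_eval n e x)"
proof -
  define \<rho> where "\<rho> x = (\<lambda>k. x k * omega p (a k))" for x :: "nat \<Rightarrow> complex"
  have inj: "inj_on \<rho> (Bt n p t)"
    by (rule inj_onI) (auto simp: \<rho>_def omega_nonzero fun_eq_iff dest: fun_cong)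
  have "\<rho> ` Bt n p t = Bt n p t"
    by (rule endo_inj_surj[OF finite_Bt _ inj]) (use assms rotate_in_Bt in \<open>auto simp: \<rho>_def\<close>)
  then have "(\<Sum>x\<in>Bt n p t. mono_eval n e x) = (\<Sum>x\<in>Bt n p t. mono_eval n e (\<rho> x))"
    using sum.reindex[OF inj, of "mono_eval n e"] by simp
  also have "\<dots> = (\<Sum>x\<in>Bt n p t. omega p (\<Sum>k<n. a k * e k) * mono_eval n e x)"
    by (simp add: mono_eval_def \<rho>_def power_mult_distrib prod.distrib omega_power omega_sum
        mult.commute)
  also have "\<dots> = omega p (\<Sum>k<n. a k * e k) * (\<Sum>x\<in>Bt n p t. mono_eval n e x)"
    by (rule sum_distrib_left[symmetric])
  finally show ?thesis .
qed

lemma sum_mono_eval_Bt_eq_0: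
  assumes "p > 0" "i < n" "j < n" "e i mod p \<noteq> e j mod p"
  shows "(\<Sum>x\<in>Bt n p t. mono_eval n e x) = 0"
proof -
  define a where "a k = (if k = i then 1 else 0) + (if k = j then p - 1 else 0)" for k
  have "(\<Sum>k<n. a k) = p"
    using assms by (simp add: a_def sum.distrib)
  moreover have "(\<Sum>k<n. a k * e k)
      = (\<Sum>k<n. (if k = i then e i else 0) + (if k = j then (p - 1) * e j else 0))"
    by (rule sum.cong) (auto simp: a_def)
  then have "(\<Sum>k<n. a k * e k) = e i + (p - 1) * e j"
    using assms by (simp add: sum.distrib)
  moreover have "omega p (e i + (p - 1) * e j) \<noteq> 1"
    using assms by (auto simp: omega_eq_1_iff dest: mod_eq_if_dvd_add_pred_mult)
  ultimately show ?thesis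
    using sum_mono_eval_Bt_eq_omega_mult[OF assms(1), of a n e t] by auto
qed

lemma mdeg_less_if_mod_eq:
  assumes "u \<in> monoms n" "v \<in> monoms n" "v \<noteq> u"
    and "\<And>k. k < n \<Longrightarrow> u k < p" "\<And>k. k < n \<Longrightarrow> v k mod p = u k mod p"
  shows "mdeg n u < mdeg n v"
proof -
  have le: "u k \<le> v k" if "k < n" for k
  proof -
    have "u k = v k mod p"
      using assms(4,5)[OF that] by simp
    then show ?thesis
      using mod_less_eq_dividend[of "v k" p] by linarith
  qed
  obtain k where "v k \<noteq> u k"
    using assms(3) by auto
  moreover have "k < n"
  proof (rule ccontr)
    assume "\<not> k < n"
    then show False
      using assms(1,2) \<open>v k \<noteq> u k\<close> by (simp add: monoms_def)
  qed
  ultimately show ?thesis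
    unfolding mdeg_def using le
    by (intro sum_strict_mono_ex1) (auto simp: order.strict_iff_order intro!: bexI[of _ k])
qed

lemma mdeg_lower_bound_if_mod_shift:
  assumes "0 < c" "c < p" "mdeg n v \<le> mdeg n u"
    and "\<And>k. k < n \<Longrightarrow> u k < p" "\<And>k. k < n \<Longrightarrow> v k mod p = (u k + c) mod p"
  shows "n * (p - 1) \<le> p * mdeg n u"
proof -
  define carry where "carry k = (if p \<le> u k + c then 1 else 0 :: nat)" for k
  define D where "D = (\<Sum>k<n. carry k)"
  have "u k + c \<le> v k + p * carry k" if "k < n" for k
  proof -
    have "(u k + c) mod p + p * carry k = u k + c"
    proof (cases "p \<le> u k + c")
      case True
      then have "(u k + c) mod p = u k + c - p"
        using assms(2) assms(4)[OF that] by (simp add: le_mod_geq)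
      with True show ?thesis by (simp add: carry_def)
    qed (simp add: carry_def)
    then show ?thesis
      using assms(5)[OF that] mod_less_eq_dividend[of "v k" p] by linarith
  qed
  then have "(\<Sum>k<n. u k + c) \<le> (\<Sum>k<n. v k + p * carry k)"
    by (intro sum_mono) auto
  then have "mdeg n u + n * c \<le> mdeg n v + p * D"
    by (simp add: mdeg_def D_def sum.distrib sum_distrib_left)
  then have shift: "n * c \<le> p * D"
    using assms(3) by linarith
  have "(\<Sum>k<n. (p - c) * carry k) \<le> (\<Sum>k<n. u k)"
    by (intro sum_mono) (auto simp: carry_def)
  then have carries: "(p - c) * D \<le> mdeg n u"
    by (simp add: mdeg_def D_def sum_distrib_left)
  have "n * (p - 1) \<le> n * (c * (p - c))"
    using diff_one_le_mult_diff[OF assms(1,2)] by simp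
  also have "\<dots> = (p - c) * (n * c)"
    by simp
  also have "\<dots> \<le> (p - c) * (p * D)"
    using shift by simp
  also have "\<dots> = p * ((p - c) * D)"
    by simp
  also have "\<dots> \<le> p * mdeg n u"
    using carries by simp
  finally show ?thesis .
qed

lemma exists_incongruent_shifted_exponents:
  assumes "u \<in> Dset n p" "v \<in> monoms n" "v \<noteq> u" "mdeg n v \<le> mdeg n u"
    and small: "p * mdeg n u < n * (p - 1)"
  shows "\<exists>i<n. \<exists>j<n. (v i + (p - 1) * u i) mod p \<noteq> (v j + (p - 1) * u j) mod p"
proof (rule ccontr)
  assume "\<not> ?thesis"
  moreover have "p > 0" "n > 0"
    using small by (auto intro: gr_zeroI)
  ultimately have all_cong: "(v k + (p - 1) * u k) mod p = (v 0 + (p - 1) * u 0) mod p"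
    if "k < n" for k
    using that by blast
  define c where "c = (v 0 + (p - 1) * u 0) mod p"
  have u_less: "u k < p" if "k < n" for k
    using assms(1) that \<open>p > 0\<close> by (auto simp: Dset_def)
  have shifted: "v k mod p = (u k + c) mod p" if "k < n" for k
  proof -
    have "v k + p * u k = (v k + (p - 1) * u k) + u k"
      using \<open>p > 0\<close> by (cases p) auto
    then have "v k mod p = ((v k + (p - 1) * u k) mod p + u k) mod p"
      by (metis mod_add_left_eq mod_mult_self2)
    then show ?thesis
      using all_cong[OF that] by (simp add: c_def add.commute)
  qed
  show False
  proof (cases "c = 0")
    case True
    then have "mdeg n u < mdeg n v"
      using assms(1,2,3) u_less shifted by (intro mdeg_less_if_mod_eq) (auto simp: Dset_def)
    with assms(4) show False by simp
  next
    case False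
    have "c < p"
      using \<open>p > 0\<close> by (simp add: c_def)
    with False have "n * (p - 1) \<le> p * mdeg n u"
      using assms(4) u_less shifted by (intro mdeg_lower_bound_if_mod_shift[where v = v]) auto
    with small show False by simp
  qed
qed

lemma sum_shifted_mono_eval_Bt_eq_0:
  assumes "u \<in> Dset n p" "v \<in> monoms n" "v \<noteq> u" "mdeg n v \<le> mdeg n u"
    and "p * mdeg n u < n * (p - 1)"
  shows "(\<Sum>x\<in>Bt n p t. mono_eval n (\<lambda>k. v k + (p - 1) * u k) x) = 0"
proof -
  obtain i j where "i < n" "j < n"
    "(v i + (p - 1) * u i) mod p \<noteq> (v j + (p - 1) * u j) mod p"
    using exists_incongruent_shifted_exponents[OF assms] by blast
  moreover have "p > 0"
    using assms(5) by (auto intro: gr_zeroI)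
  ultimately show ?thesis
    by (intro sum_mono_eval_Bt_eq_0[where e = "\<lambda>k. v k + (p - 1) * u k"]) auto
qed

lemma mdeg_le_leading_mono:
  assumes "term_order n ord" "degree_compatible n ord"
    and "is_poly n f" "is_leading_mono ord f u" "f v \<noteq> 0"
  shows "mdeg n v \<le> mdeg n u"
proof (rule ccontr)
  assume higher: "\<not> mdeg n v \<le> mdeg n u"
  have "u \<in> monoms n" "v \<in> monoms n"
    using assms(3-5) by (auto simp: is_poly_def is_leading_mono_def)
  with higher assms(2) have "ord u v"
    by (simp add: degree_compatible_def)
  moreover have "ord v u"
    using assms(4,5) higher by (auto simp: is_leading_mono_def)
  ultimately show False
    using assms(1) \<open>u \<in> monoms n\<close> \<open>v \<in> monoms n\<close> unfolding term_order_def by blast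
qed

lemma coeff_eq_0_if_orthogonal:
  fixes f :: "(nat \<Rightarrow> nat) \<Rightarrow> complex"
  assumes "is_poly n f" "finite X" "X \<noteq> {}" "\<And>x. x \<in> X \<Longrightarrow> peval n f x = 0"
    and "\<And>x. x \<in> X \<Longrightarrow> mono_eval n (\<lambda>k. u k + w k) x = 1"
    and "\<And>v. f v \<noteq> 0 \<Longrightarrow> v \<noteq> u \<Longrightarrow> (\<Sum>x\<in>X. mono_eval n (\<lambda>k. v k + w k) x) = 0"
  shows "f u = 0"
proof (rule ccontr)
  assume "f u \<noteq> 0"
  define supp where "supp = {v. f v \<noteq> 0}"
  have "finite supp" "u \<in> supp"
    using assms(1) \<open>f u \<noteq> 0\<close> by (auto simp: is_poly_def supp_def)
  have "0 = (\<Sum>x\<in>X. peval n f x * mono_eval n w x)"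
    using assms(4) by simp
  also have "\<dots> = (\<Sum>v\<in>supp. f v * (\<Sum>x\<in>X. mono_eval n (\<lambda>k. v k + w k) x))"
    by (simp add: peval_eq_sum_mono_eval supp_def mono_eval_add sum_distrib_left
        sum_distrib_right mult.assoc sum.swap[of _ X])
  also have "\<dots> = f u * (\<Sum>x\<in>X. mono_eval n (\<lambda>k. u k + w k) x)"
    using \<open>finite supp\<close> \<open>u \<in> supp\<close> assms(6) by (simp add: sum.remove supp_def)
  also have "\<dots> = f u * of_nat (card X)"
    using assms(5) by simp
  finally show False
    using \<open>f u \<noteq> 0\<close> assms(2,3) by simp
qed

theorem mainTheorem9:
  fixes n p t :: nat
    and ord :: "(nat \<Rightarrow> nat) \<Rightarrow> (nat \<Rightarrow> nat) \<Rightarrow> bool"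
  assumes "n \<ge> 1" and "prime p" and "p dvd n"
    and "term_order n ord" and "degree_compatible n ord"
    and "t \<le> p - 1"
  shows "{u \<in> Dset n p. real (mdeg n u) < real n * (real p - 1) / real p} \<subseteq> Sm n ord (Bt n p t)"
proof (rule subsetI, elim CollectE conjE)
  fix u assume u: "u \<in> Dset n p" and "real (mdeg n u) < real n * (real p - 1) / real p"
  have "p \<ge> 2"
    using assms(2) by (rule prime_ge_2_nat)
  with \<open>real (mdeg n u) < _\<close> have "real (p * mdeg n u) < real (n * (p - 1))"
    by (simp add: pos_less_divide_eq mult.commute)
  then have small: "p * mdeg n u < n * (p - 1)"
    by (simp only: of_nat_less_iff)
  have "f u = 0" if f: "is_poly n f" "\<forall>x\<in>Bt n p t. peval n f x = 0" "is_leading_mono ord f u" for f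
  proof (rule coeff_eq_0_if_orthogonal[where f = f and u = u and w = "\<lambda>k. (p - 1) * u k"])
    have multiple: "u k + (p - 1) * u k = p * u k" for k
      using \<open>p \<ge> 2\<close> by (cases p) auto
    show "mono_eval n (\<lambda>k. u k + (p - 1) * u k) x = 1" if "x \<in> Bt n p t" for x
      using \<open>p \<ge> 2\<close> that multiple by (intro mono_eval_Bset_eq_1[where p = p]) (auto simp: Bt_def)
    show "(\<Sum>x\<in>Bt n p t. mono_eval n (\<lambda>k. v k + (p - 1) * u k) x) = 0"
      if support: "f v \<noteq> 0" and "v \<noteq> u" for v
      using f(1) support \<open>v \<noteq> u\<close> small
        mdeg_le_leading_mono[where v = v, OF assms(4,5) f(1,3) support]
      by (intro sum_shifted_mono_eval_Bt_eq_0[OF u]) (auto simp: is_poly_def)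
  qed (use f finite_Bt Bt_nonempty assms(1,6) \<open>p \<ge> 2\<close> in auto)
  then show "u \<in> Sm n ord (Bt n p t)"
    using u by (auto simp: Sm_def Dset_def is_leading_mono_def)
qed

end
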